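(* There exists a $5$-ary $2$-frameproof code of length $4$ and cardinality $32$ satisfying Property $P(2)$.
   Context: For $P\subseteq F^l$ over a finite alphabet $F$, $desc(P)=\{x\in F^l: \text{for every } i \text{ there is } y\in P \text{ with } x_i=y_i\}$. For an integer $c\geq 2$, a $c$-frameproof code is a subset $C\subseteq F^l$ with $desc(P)\cap C=P$ for every $P\subseteq C$ with $|P|\leq c$; it is $q$-ary if $|F|=q$. A $c$-frameproof code $C$ over an alphabet $S$ satisfies Property $P(t)$ if there is a special element $\infty\in S$ such that every codeword has at most $t-1$ coordinates equal to $\infty$ and any two codewords that agree in $t$ coordinates where their common value is not $\infty$ are equal. *)

theory Defs
  imports "HOL-Library.FuncSet"
begin

definition words :: "'a set \<Rightarrow> nat \<Rightarrow> (nat \<Rightarrow> 'a) set" where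
  "words F l = PiE {0..<l} (\<lambda>_. F)"

definition desc :: "'a set \<Rightarrow> nat \<Rightarrow> (nat \<Rightarrow> 'a) set \<Rightarrow> (nat \<Rightarrow> 'a) set" where
  "desc F l P = {x \<in> words F l. \<forall>i<l. \<exists>y\<in>P. x i = y i}"

definition frameproof :: "nat \<Rightarrow> 'a set \<Rightarrow> nat \<Rightarrow> (nat \<Rightarrow> 'a) set \<Rightarrow> bool" where
  "frameproof c F l C \<longleftrightarrow> C \<subseteq> words F l \<and>
     (\<forall>P. P \<subseteq> C \<and> card P \<le> c \<longrightarrow> desc F l P \<inter> C = P)"

definition propertyP :: "nat \<Rightarrow> 'a set \<Rightarrow> nat \<Rightarrow> (nat \<Rightarrow> 'a) set \<Rightarrow> bool" where
  "propertyP t S l C \<longleftrightarrow> (\<exists>inf \<in> S.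
     (\<forall>x\<in>C. card {i \<in> {0..<l}. x i = inf} \<le> t - 1) \<and>
     (\<forall>x\<in>C. \<forall>y\<in>C. card {i \<in> {0..<l}. x i = y i \<and> x i \<noteq> inf} \<ge> t \<longrightarrow> x = y))"

end

theory Submission
  imports Defs
begin

text \<open>
  Property \<open>P(t)\<close> forces frameproofness once the length is large: a word \<open>x\<close> outside a
  coalition \<open>P\<close> of size at most \<open>c\<close> agrees with each member of \<open>P\<close> in at most \<open>t - 1\<close>
  coordinates not equal to \<open>\<infinity>\<close>, so if \<open>x\<close> is a descendant of \<open>P\<close> it has at most
  \<open>c (t - 1)\<close> such coordinates, and at most \<open>t - 1\<close> coordinates equal to \<open>\<infinity>\<close>.
  Hence \<open>l \<le> (c + 1)(t - 1)\<close>; for \<open>c = t = 2\<close> and \<open>l = 4\<close> this is impossible.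
  It remains to exhibit 32 words of length 4 over \<open>{0,\<dots>,4}\<close> with Property \<open>P(2)\<close>
  (taking \<open>\<infinity> = 4\<close>), which is checked by computation.
\<close>

lemma card_coords_partition:
  fixes x :: "nat \<Rightarrow> 'a"
  shows "card {i \<in> {0..<l}. x i \<noteq> a} + card {i \<in> {0..<l}. x i = a} = l"
proof -
  have "card {i \<in> {0..<l}. x i \<noteq> a} + card {i \<in> {0..<l}. x i = a}
      = card ({i \<in> {0..<l}. x i \<noteq> a} \<union> {i \<in> {0..<l}. x i = a})"
    by (rule card_Un_disjoint[symmetric]) auto
  also have "{i \<in> {0..<l}. x i \<noteq> a} \<union> {i \<in> {0..<l}. x i = a} = {0..<l}"
    by auto
  finally show ?thesis by simp
qed

lemma card_covered_coords_le:
  fixes x :: "nat \<Rightarrow> 'a"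
  assumes "finite P"
    and covered: "\<forall>i<l. \<exists>y\<in>P. x i = y i"
    and agree: "\<forall>y\<in>P. card {i \<in> {0..<l}. x i = y i \<and> x i \<noteq> a} \<le> k"
  shows "card {i \<in> {0..<l}. x i \<noteq> a} \<le> card P * k"
proof -
  let ?A = "\<lambda>y. {i \<in> {0..<l}. x i = y i \<and> x i \<noteq> a}"
  have "finite (?A y)" for y by (rule finite_subset[of _ "{0..<l}"]) auto
  have "{i \<in> {0..<l}. x i \<noteq> a} \<subseteq> (\<Union>y\<in>P. ?A y)"
    using covered by fastforce
  then have "card {i \<in> {0..<l}. x i \<noteq> a} \<le> card (\<Union>y\<in>P. ?A y)"
    using \<open>finite P\<close> \<open>\<And>y. finite (?A y)\<close> by (intro card_mono) auto
  also have "\<dots> \<le> (\<Sum>y\<in>P. card (?A y))"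
    using \<open>finite P\<close> by (rule card_UN_le)
  also have "\<dots> \<le> (\<Sum>y\<in>P. k)"
    using agree by (intro sum_mono) auto
  finally show ?thesis by simp
qed

lemma frameproof_if_propertyP:
  assumes words: "C \<subseteq> words F l" and "finite C"
    and propP: "propertyP t F l C"
    and long: "(c + 1) * (t - 1) < l"
  shows "frameproof c F l C"
  unfolding frameproof_def
proof (intro conjI allI impI words)
  obtain a where few_a: "\<forall>x\<in>C. card {i \<in> {0..<l}. x i = a} \<le> t - 1"
    and separating: "\<forall>x\<in>C. \<forall>y\<in>C. t \<le> card {i \<in> {0..<l}. x i = y i \<and> x i \<noteq> a} \<longrightarrow> x = y"
    using propP unfolding propertyP_def by auto
  fix P assume "P \<subseteq> C \<and> card P \<le> c"
  then have "P \<subseteq> C" and "card P \<le> c" by auto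
  then have "finite P" using \<open>finite C\<close> finite_subset by auto
  show "desc F l P \<inter> C = P"
  proof
    show "P \<subseteq> desc F l P \<inter> C"
      using \<open>P \<subseteq> C\<close> words unfolding desc_def by blast
  next
    show "desc F l P \<inter> C \<subseteq> P"
    proof
      fix x assume "x \<in> desc F l P \<inter> C"
      then have "x \<in> C" and covered: "\<forall>i<l. \<exists>y\<in>P. x i = y i"
        unfolding desc_def by auto
      show "x \<in> P"
      proof (rule ccontr)
        assume "x \<notin> P"
        have "\<forall>y\<in>P. card {i \<in> {0..<l}. x i = y i \<and> x i \<noteq> a} \<le> t - 1"
        proof
          fix y assume "y \<in> P"
          then have "x \<noteq> y" and "y \<in> C" using \<open>x \<notin> P\<close> \<open>P \<subseteq> C\<close> by auto
          then show "card {i \<in> {0..<l}. x i = y i \<and> x i \<noteq> a} \<le> t - 1"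
            using separating \<open>x \<in> C\<close> by fastforce
        qed
        then have "card {i \<in> {0..<l}. x i \<noteq> a} \<le> card P * (t - 1)"
          using card_covered_coords_le[OF \<open>finite P\<close> covered] by blast
        also have "\<dots> \<le> c * (t - 1)"
          using \<open>card P \<le> c\<close> by simp
        finally have "l \<le> c * (t - 1) + (t - 1)"
          using card_coords_partition[of l x a] few_a \<open>x \<in> C\<close> by fastforce
        then show False using long by simp
      qed
    qed
  qed
qed

definition word_of :: "nat \<Rightarrow> 'a list \<Rightarrow> nat \<Rightarrow> 'a" where
  "word_of l xs = (\<lambda>i. if i < l then xs ! i else undefined)"

lemma word_of_nth [simp]: "i < l \<Longrightarrow> word_of l xs i = xs ! i"
  by (simp add: word_of_def)

lemma word_of_in_words: "length xs = l \<Longrightarrow> set xs \<subseteq> F \<Longrightarrow> word_of l xs \<in> words F l"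
  by (auto simp: words_def word_of_def PiE_def extensional_def)

lemma inj_on_word_of: "inj_on (word_of l) {xs. length xs = l}"
proof
  fix xs ys assume "xs \<in> {xs. length xs = l}" "ys \<in> {xs. length xs = l}"
    and "word_of l xs = word_of l ys"
  then show "xs = ys"
    by (metis (mono_tags) mem_Collect_eq nth_equalityI word_of_nth)
qed

lemma card_coords_eq_length_filter:
  "card {i \<in> {0..<n}. Q i} = length (filter Q [0..<n])"
proof -
  have "{i \<in> {0..<n}. Q i} = set (filter Q [0..<n])" by auto
  then show ?thesis using distinct_card[of "filter Q [0..<n]"] by simp
qed

lemma propertyP_word_of_image:
  assumes "a \<in> S"
    and few_a: "\<forall>xs\<in>set L. length (filter (\<lambda>i. xs ! i = a) [0..<l]) \<le> t - 1"
    and separating: "\<forall>xs\<in>set L. \<forall>ys\<in>set L.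
      t \<le> length (filter (\<lambda>i. xs ! i = ys ! i \<and> xs ! i \<noteq> a) [0..<l]) \<longrightarrow> xs = ys"
  shows "propertyP t S l (word_of l ` set L)"
  unfolding propertyP_def
proof (intro bexI[OF _ \<open>a \<in> S\<close>] conjI ballI)
  fix x assume "x \<in> word_of l ` set L"
  then obtain xs where "xs \<in> set L" and "x = word_of l xs" by auto
  then have "{i \<in> {0..<l}. x i = a} = {i \<in> {0..<l}. xs ! i = a}" by auto
  then show "card {i \<in> {0..<l}. x i = a} \<le> t - 1"
    using few_a \<open>xs \<in> set L\<close> by (simp only: card_coords_eq_length_filter)
next
  fix x y assume "x \<in> word_of l ` set L" "y \<in> word_of l ` set L"
  then obtain xs ys where xs: "xs \<in> set L" "x = word_of l xs"
    and ys: "ys \<in> set L" "y = word_of l ys"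
    by auto
  have "{i \<in> {0..<l}. x i = y i \<and> x i \<noteq> a}
      = {i \<in> {0..<l}. xs ! i = ys ! i \<and> xs ! i \<noteq> a}"
    using xs ys by auto
  then have "card {i \<in> {0..<l}. x i = y i \<and> x i \<noteq> a}
      = length (filter (\<lambda>i. xs ! i = ys ! i \<and> xs ! i \<noteq> a) [0..<l])"
    by (simp only: card_coords_eq_length_filter)
  then show "t \<le> card {i \<in> {0..<l}. x i = y i \<and> x i \<noteq> a} \<longrightarrow> x = y"
    using separating xs ys by auto
qed

definition code32 :: "nat list list" where
  "code32 = [[0,0,0,4], [0,1,4,2], [0,2,3,4], [0,3,4,3], [0,4,1,0], [0,4,2,1],
    [1,0,3,4], [1,1,4,0], [1,2,0,4], [1,3,4,1], [1,4,1,2], [1,4,2,3],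
    [2,0,4,0], [2,1,1,4], [2,2,4,2], [2,3,2,4], [2,4,0,3], [2,4,3,1],
    [3,0,4,3], [3,1,2,4], [3,2,4,1], [3,3,1,4], [3,4,0,0], [3,4,3,2],
    [4,0,1,1], [4,0,2,2], [4,1,0,1], [4,1,3,3], [4,2,1,3], [4,2,2,0], [4,3,0,2], [4,3,3,0]]"

lemma code32_lengths: "\<forall>xs\<in>set code32. length xs = 4"
  by (simp add: code32_def)

lemma code32_alphabet: "\<forall>xs\<in>set code32. set xs \<subseteq> {0..<5}"
  by (simp add: code32_def)

lemma distinct_code32: "distinct code32"
  by code_simp

lemma code32_few_infinity:
  "\<forall>xs\<in>set code32. length (filter (\<lambda>i. xs ! i = 4) [0..<4]) \<le> 1"
  by code_simp

lemma code32_separating: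
  "\<forall>xs\<in>set code32. \<forall>ys\<in>set code32.
     2 \<le> length (filter (\<lambda>i. xs ! i = ys ! i \<and> xs ! i \<noteq> 4) [0..<4]) \<longrightarrow> xs = ys"
  by code_simp

theorem lemma3:
  shows "\<exists>(F :: nat set) C. finite F \<and> card F = 5 \<and> frameproof 2 F 4 C \<and> card C = 32
           \<and> propertyP 2 F 4 C"
proof (intro exI conjI)
  let ?C = "word_of 4 ` set code32"
  show "finite {0..<5::nat}" and "card {0..<5::nat} = 5" by simp_all
  show propP: "propertyP 2 {0..<5} 4 ?C"
    using code32_few_infinity code32_separating by (intro propertyP_word_of_image) auto
  have "?C \<subseteq> words {0..<5} 4"
    using code32_lengths code32_alphabet word_of_in_words by blast
  then show "frameproof 2 {0..<5} 4 ?C"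
    using propP by (intro frameproof_if_propertyP) auto
  have "inj_on (word_of 4) (set code32)"
    using inj_on_subset[OF inj_on_word_of] code32_lengths by blast
  then have "card ?C = length code32"
    using distinct_code32 by (simp add: card_image distinct_card)
  then show "card ?C = 32" by (simp add: code32_def)
qed

end
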